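(* If a permutation class has a finite $m$-basis (i.e. it equals the set of permutations avoiding, as submatrices, the matrices of some finite antichain of quasi-permutation matrices), then its $p$-basis is finite.
   Context: A permutation $\sigma$ of $\{1,\dots,n\}$ is identified with its permutation matrix ($M_\sigma(i,j)=1$ iff $i=\sigma(j)$). A matrix $M'$ is a submatrix of $M$ ($M'\preccurlyeq M$) if it is obtained from $M$ by deleting rows and/or columns; the pattern order on permutations is this order restricted to permutation matrices, and a permutation class is a set of permutations closed downward for it. A quasi-permutation matrix is a binary matrix with at most one $1$ in each row and column. An $m$-basis of a permutation class $\mathcal{C}$ is an antichain $\mathcal{M}$ of matrices (for $\preccurlyeq$) such that $\mathcal{C}$ is exactly the set of permutations having no submatrix in $\mathcal{M}$. The $p$-basis of $\mathcal{C}$ is the set of permutations not in $\mathcal{C}$ that are minimal for the pattern order among permutations not in $\mathcal{C}$. *)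

theory Defs
  imports "HOL-Combinatorics.Permutations"
begin

text \<open>A binary matrix with m rows and n columns is a triple (m, n, A) where
  A i j (for i < m, j < n; 0-based) is the entry; entries outside the range are False.\<close>
type_synonym bmat = "nat \<times> nat \<times> (nat \<Rightarrow> nat \<Rightarrow> bool)"

definition wf_mat :: "bmat \<Rightarrow> bool" where
  "wf_mat M = (case M of (m, n, A) \<Rightarrow> \<forall>i j. A i j \<longrightarrow> i < m \<and> j < n)"

definition submat :: "bmat \<Rightarrow> bmat \<Rightarrow> bool" (infix "\<preceq>\<^sub>m" 50) where
  "submat M N = (case M of (p, q, A) \<Rightarrow> case N of (m, n, B) \<Rightarrow>
     \<exists>r c :: nat \<Rightarrow> nat.
        strict_mono_on {..<p} r \<and> r ` {..<p} \<subseteq> {..<m} \<and>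
        strict_mono_on {..<q} c \<and> c ` {..<q} \<subseteq> {..<n} \<and>
        (\<forall>i<p. \<forall>j<q. A i j = B (r i) (c j)))"

definition quasi_perm_mat :: "bmat \<Rightarrow> bool" where
  "quasi_perm_mat M = (wf_mat M \<and> (case M of (m, n, A) \<Rightarrow>
     (\<forall>i j j'. A i j \<and> A i j' \<longrightarrow> j = j') \<and>
     (\<forall>i i' j. A i j \<and> A i' j \<longrightarrow> i = i')))"

text \<open>A permutation of size n is a pair (n, \<sigma>) with \<sigma> a permutation of {0..<n}
  (fixing everything outside), i.e. of {1..n} shifted to 0-based indices.\<close>
type_synonym perm = "nat \<times> (nat \<Rightarrow> nat)"

definition is_perm :: "perm \<Rightarrow> bool" where
  "is_perm \<pi> = (snd \<pi> permutes {..<fst \<pi>})"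

definition perm_mat :: "perm \<Rightarrow> bmat" where
  "perm_mat \<pi> = (case \<pi> of (n, \<sigma>) \<Rightarrow> (n, n, \<lambda>i j. i < n \<and> j < n \<and> i = \<sigma> j))"

definition pattern_le :: "perm \<Rightarrow> perm \<Rightarrow> bool" (infix "\<preceq>\<^sub>p" 50) where
  "pattern_le \<pi> \<tau> = (perm_mat \<pi> \<preceq>\<^sub>m perm_mat \<tau>)"

definition perm_class :: "perm set \<Rightarrow> bool" where
  "perm_class C = ((\<forall>\<tau>\<in>C. is_perm \<tau>) \<and>
     (\<forall>\<tau>\<in>C. \<forall>\<pi>. is_perm \<pi> \<and> \<pi> \<preceq>\<^sub>p \<tau> \<longrightarrow> \<pi> \<in> C))"

definition mat_antichain :: "bmat set \<Rightarrow> bool" where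
  "mat_antichain \<M> = (\<forall>M\<in>\<M>. \<forall>N\<in>\<M>. M \<preceq>\<^sub>m N \<longrightarrow> M = N)"

definition Av_mat :: "bmat set \<Rightarrow> perm set" where
  "Av_mat \<M> = {\<tau>. is_perm \<tau> \<and> (\<forall>M\<in>\<M>. \<not> M \<preceq>\<^sub>m perm_mat \<tau>)}"

definition is_m_basis :: "perm set \<Rightarrow> bmat set \<Rightarrow> bool" where
  "is_m_basis C \<M> = ((\<forall>M\<in>\<M>. wf_mat M) \<and> mat_antichain \<M> \<and> C = Av_mat \<M>)"

definition p_basis :: "perm set \<Rightarrow> perm set" where
  "p_basis C = {\<pi>. is_perm \<pi> \<and> \<pi> \<notin> C \<and>
     (\<forall>\<tau>. is_perm \<tau> \<and> \<tau> \<notin> C \<and> \<tau> \<preceq>\<^sub>p \<pi> \<longrightarrow> \<tau> = \<pi>)}"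

end

theory Submission imports Defs begin

text \<open>Every element of the p-basis contains some matrix M of the m-basis, say with p rows
  and q columns. If it had more than p + q points, one of them would lie neither in a row
  nor in a column of an occurrence of M; deleting that point yields a strictly smaller
  permutation that still contains M, hence still lies outside the class, contradicting
  minimality. So the p-basis consists of permutations of bounded size, of which there
  are finitely many.\<close>

definition skip :: "nat \<Rightarrow> nat \<Rightarrow> nat" where
  "skip a x = (if x < a then x else Suc x)"

definition unskip :: "nat \<Rightarrow> nat \<Rightarrow> nat" where
  "unskip a y = (if y < a then y else y - 1)"

lemma unskip_skip [simp]: "unskip a (skip a x) = x"
  by (simp add: unskip_def skip_def)

lemma skip_unskip: "y \<noteq> a \<Longrightarrow> skip a (unskip a y) = y"
  by (auto simp: unskip_def skip_def)

lemma skip_neq: "skip a x \<noteq> a"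
  by (simp add: skip_def)

lemma skip_less: "x < n - 1 \<Longrightarrow> a < n \<Longrightarrow> skip a x < n"
  by (simp add: skip_def; linarith)

lemma unskip_less: "y < n \<Longrightarrow> y \<noteq> a \<Longrightarrow> a < n \<Longrightarrow> unskip a y < n - 1"
  by (auto simp: unskip_def)

lemma strict_mono_on_skip: "strict_mono_on A (skip a)"
  by (auto simp: strict_mono_on_def skip_def)

lemma unskip_eq_iff: "y \<noteq> a \<Longrightarrow> z \<noteq> a \<Longrightarrow> unskip a y = unskip a z \<longleftrightarrow> y = z"
  by (auto simp: unskip_def)

lemma strict_mono_on_unskip_comp:
  assumes "strict_mono_on A f" and "a \<notin> f ` A"
  shows "strict_mono_on A (unskip a \<circ> f)"
proof (rule strict_mono_onI)
  fix x y assume "x \<in> A" "y \<in> A" "x < y"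
  with assms have "f x < f y" "f x \<noteq> a" "f y \<noteq> a" by (auto simp: strict_mono_on_def)
  then show "(unskip a \<circ> f) x < (unskip a \<circ> f) y" by (auto simp: unskip_def)
qed

text \<open>The permutation obtained from \<sigma> by deleting column k and row \<sigma> k of its matrix.\<close>
definition delete_point :: "nat \<Rightarrow> (nat \<Rightarrow> nat) \<Rightarrow> nat \<Rightarrow> nat \<Rightarrow> nat" where
  "delete_point n \<sigma> k j = (if j < n - 1 then unskip (\<sigma> k) (\<sigma> (skip k j)) else j)"

context
  fixes n k :: nat and \<sigma> :: "nat \<Rightarrow> nat"
  assumes perm: "\<sigma> permutes {..<n}" and k: "k < n"
begin

private lemma perm_less: "x < n \<Longrightarrow> \<sigma> x < n"
  using permutes_in_image[OF perm] by simp

private lemma perm_neq: "x < n \<Longrightarrow> x \<noteq> k \<Longrightarrow> \<sigma> x \<noteq> \<sigma> k"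
  using permutes_inj_on[OF perm] k by (meson inj_on_eq_iff lessThan_iff)

private lemma delete_point_less:
  "j < n - 1 \<Longrightarrow> delete_point n \<sigma> k j < n - 1"
proof -
  assume "j < n - 1"
  then have "skip k j < n" "skip k j \<noteq> k" using skip_less[OF _ k] skip_neq by auto
  then show ?thesis
    using unskip_less[OF perm_less perm_neq perm_less[OF k]] \<open>j < n - 1\<close>
    by (simp add: delete_point_def)
qed

lemma delete_point_permutes: "delete_point n \<sigma> k permutes {..<n - 1}"
proof -
  let ?\<tau> = "delete_point n \<sigma> k"
  have inj: "inj_on ?\<tau> {..<n - 1}"
  proof (rule inj_onI)
    fix x y assume x: "x \<in> {..<n - 1}" and y: "y \<in> {..<n - 1}" and eq: "?\<tau> x = ?\<tau> y"
    then have "\<sigma> (skip k x) = \<sigma> (skip k y)"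
      using unskip_eq_iff perm_neq skip_less[OF _ k] skip_neq by (auto simp: delete_point_def)
    then have "skip k x = skip k y"
      using permutes_inj_on[OF perm] skip_less[OF _ k] x y by (auto dest: inj_onD)
    then show "x = y" by (metis unskip_skip)
  qed
  have "?\<tau> ` {..<n - 1} = {..<n - 1}"
    by (rule endo_inj_surj) (use delete_point_less inj in force)+
  with inj have "bij_betw ?\<tau> {..<n - 1} {..<n - 1}" by (simp add: bij_betw_def)
  moreover have "\<forall>x. x \<notin> {..<n - 1} \<longrightarrow> ?\<tau> x = x" by (simp add: delete_point_def)
  ultimately show ?thesis using bij_imp_permutes by blast
qed

lemma delete_point_pattern_le: "(n - 1, delete_point n \<sigma> k) \<preceq>\<^sub>p (n, \<sigma>)"
  unfolding pattern_le_def perm_mat_def submat_def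
proof (simp, intro exI conjI)
  show "strict_mono_on {..<n - Suc 0} (skip (\<sigma> k))" "strict_mono_on {..<n - Suc 0} (skip k)"
    by (rule strict_mono_on_skip)+
  show "skip (\<sigma> k) ` {..<n - Suc 0} \<subseteq> {..<n}" "skip k ` {..<n - Suc 0} \<subseteq> {..<n}"
    using skip_less[OF _ perm_less[OF k]] skip_less[OF _ k] by auto
  show "\<forall>i<n - Suc 0. \<forall>j<n - Suc 0. (i = delete_point n \<sigma> k j) =
          (skip (\<sigma> k) i < n \<and> skip k j < n \<and> skip (\<sigma> k) i = \<sigma> (skip k j))"
  proof (intro allI impI)
    fix i j assume i: "i < n - Suc 0" and j: "j < n - Suc 0"
    have row: "skip (\<sigma> k) i < n" using skip_less[OF _ perm_less[OF k]] i by simp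
    have col: "skip k j < n" using skip_less[OF _ k] j by simp
    have "(i = delete_point n \<sigma> k j) = (i = unskip (\<sigma> k) (\<sigma> (skip k j)))"
      using j by (simp add: delete_point_def)
    also have "\<dots> = (skip (\<sigma> k) i = \<sigma> (skip k j))"
      using skip_unskip[OF perm_neq[OF col skip_neq]] by (metis unskip_skip)
    finally show "(i = delete_point n \<sigma> k j) =
        (skip (\<sigma> k) i < n \<and> skip k j < n \<and> skip (\<sigma> k) i = \<sigma> (skip k j))"
      using row col by simp
  qed
qed

lemma submat_perm_mat_delete_point:
  assumes r: "strict_mono_on {..<p} r" "r ` {..<p} \<subseteq> {..<n}"
    and c: "strict_mono_on {..<q} c" "c ` {..<q} \<subseteq> {..<n}"
    and A: "\<forall>i<p. \<forall>j<q. A i j = (r i < n \<and> c j < n \<and> r i = \<sigma> (c j))"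
    and row: "\<sigma> k \<notin> r ` {..<p}" and col: "k \<notin> c ` {..<q}"
  shows "(p, q, A) \<preceq>\<^sub>m perm_mat (n - 1, delete_point n \<sigma> k)"
  unfolding perm_mat_def submat_def
proof (simp, intro exI conjI)
  show "strict_mono_on {..<p} (unskip (\<sigma> k) \<circ> r)" "strict_mono_on {..<q} (unskip k \<circ> c)"
    using strict_mono_on_unskip_comp r(1) row c(1) col by blast+
  show "(unskip (\<sigma> k) \<circ> r) ` {..<p} \<subseteq> {..<n - Suc 0}"
  proof clarsimp
    fix i assume "i < p"
    then have "r i \<in> r ` {..<p}" by simp
    with r(2) row have "r i < n" "r i \<noteq> \<sigma> k" by auto
    then show "unskip (\<sigma> k) (r i) < n - Suc 0" using unskip_less perm_less[OF k] by simp
  qed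
  show "(unskip k \<circ> c) ` {..<q} \<subseteq> {..<n - Suc 0}"
  proof clarsimp
    fix j assume "j < q"
    then have "c j \<in> c ` {..<q}" by simp
    with c(2) col have "c j < n" "c j \<noteq> k" by auto
    then show "unskip k (c j) < n - Suc 0" using unskip_less k by simp
  qed
  show "\<forall>i<p. \<forall>j<q. A i j = ((unskip (\<sigma> k) \<circ> r) i < n - Suc 0 \<and> (unskip k \<circ> c) j < n - Suc 0 \<and>
          (unskip (\<sigma> k) \<circ> r) i = delete_point n \<sigma> k ((unskip k \<circ> c) j))"
  proof (intro allI impI)
    fix i j assume i: "i < p" and j: "j < q"
    have "r i \<in> r ` {..<p}" "c j \<in> c ` {..<q}" using i j by simp_all
    then have ri: "r i < n" "r i \<noteq> \<sigma> k" and cj: "c j < n" "c j \<noteq> k"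
      using r(2) row c(2) col by auto
    have ri': "unskip (\<sigma> k) (r i) < n - 1" using unskip_less ri perm_less[OF k] by blast
    have cj': "unskip k (c j) < n - 1" using unskip_less cj k by blast
    have "delete_point n \<sigma> k (unskip k (c j)) = unskip (\<sigma> k) (\<sigma> (c j))"
      using cj' skip_unskip[OF cj(2)] by (simp add: delete_point_def)
    moreover have "(unskip (\<sigma> k) (r i) = unskip (\<sigma> k) (\<sigma> (c j))) = (r i = \<sigma> (c j))"
      using unskip_eq_iff[OF ri(2) perm_neq[OF cj]] .
    ultimately show "A i j = ((unskip (\<sigma> k) \<circ> r) i < n - Suc 0 \<and> (unskip k \<circ> c) j < n - Suc 0 \<and>
        (unskip (\<sigma> k) \<circ> r) i = delete_point n \<sigma> k ((unskip k \<circ> c) j))"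
      using A i j ri cj ri' cj' by auto
  qed
qed

end

text \<open>A point outside the at most p rows and q columns of the occurrence exists by counting:
  the columns hit are c ` {..<q} together with the preimages of the rows r ` {..<p}.\<close>
lemma submat_perm_mat_delete_some_point:
  assumes perm: "\<sigma> permutes {..<n}" and sub: "(p, q, A) \<preceq>\<^sub>m perm_mat (n, \<sigma>)"
    and big: "p + q < n"
  obtains k where "k < n" "(p, q, A) \<preceq>\<^sub>m perm_mat (n - 1, delete_point n \<sigma> k)"
proof -
  obtain r c where r: "strict_mono_on {..<p} r" "r ` {..<p} \<subseteq> {..<n}"
    and c: "strict_mono_on {..<q} c" "c ` {..<q} \<subseteq> {..<n}"
    and A: "\<forall>i<p. \<forall>j<q. A i j = (r i < n \<and> c j < n \<and> r i = \<sigma> (c j))"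
    using sub unfolding submat_def perm_mat_def by auto
  define hit where "hit = c ` {..<q} \<union> {x\<in>{..<n}. \<sigma> x \<in> r ` {..<p}}"
  have "card {x\<in>{..<n}. \<sigma> x \<in> r ` {..<p}} \<le> card (r ` {..<p})"
    by (rule card_inj_on_le) (use permutes_inj_on[OF perm] in \<open>auto intro: inj_on_subset\<close>)
  also have "\<dots> \<le> p" using card_image_le by fastforce
  moreover have "card (c ` {..<q}) \<le> q" using card_image_le by fastforce
  ultimately have "card hit \<le> q + p" unfolding hit_def by (meson add_mono card_Un_le le_trans)
  moreover have "finite hit" by (simp add: hit_def)
  ultimately have "\<not> {..<n} \<subseteq> hit"
    using big card_mono[of hit "{..<n}"] by auto
  then obtain k where k: "k < n" "k \<notin> hit" by auto
  then have "\<sigma> k \<notin> r ` {..<p}" "k \<notin> c ` {..<q}" by (auto simp: hit_def)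
  from that[OF k(1) submat_perm_mat_delete_point[OF perm k(1) r c A this]] show thesis .
qed

lemma p_basis_Av_mat_size_le:
  assumes "\<pi> \<in> p_basis (Av_mat \<M>)"
  shows "\<exists>p q A. (p, q, A) \<in> \<M> \<and> fst \<pi> \<le> p + q"
proof -
  obtain n \<sigma> where \<pi>: "\<pi> = (n, \<sigma>)" by fastforce
  have perm: "\<sigma> permutes {..<n}" using assms \<pi> by (simp add: p_basis_def is_perm_def)
  obtain p q A where M: "(p, q, A) \<in> \<M>" "(p, q, A) \<preceq>\<^sub>m perm_mat (n, \<sigma>)"
    using assms \<pi> by (auto simp: Av_mat_def p_basis_def)
  have "n \<le> p + q"
  proof (rule ccontr)
    assume "\<not> n \<le> p + q"
    then obtain k where k: "k < n" "(p, q, A) \<preceq>\<^sub>m perm_mat (n - 1, delete_point n \<sigma> k)"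
      using submat_perm_mat_delete_some_point[OF perm M(2)] by auto
    have "(n - 1, delete_point n \<sigma> k) \<notin> Av_mat \<M>" using M(1) k(2) by (auto simp: Av_mat_def)
    then have "(n - 1, delete_point n \<sigma> k) = \<pi>"
      using assms delete_point_permutes[OF perm k(1)] delete_point_pattern_le[OF perm k(1)]
      unfolding p_basis_def is_perm_def \<pi> by auto
    with \<pi> k(1) show False by auto
  qed
  with M(1) \<pi> show ?thesis by auto
qed

lemma finite_perms_size_le: "finite {\<pi>. is_perm \<pi> \<and> fst \<pi> \<le> K}"
proof (rule finite_subset)
  show "{\<pi>. is_perm \<pi> \<and> fst \<pi> \<le> K} \<subseteq> (\<Union>n\<in>{..K}. Pair n ` {\<sigma>. \<sigma> permutes {..<n}})"
    by (auto simp: is_perm_def)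
  show "finite (\<Union>n\<in>{..K}. Pair n ` {\<sigma>. \<sigma> permutes {..<n}})"
    by (auto intro: finite_permutations)
qed

theorem corollary1:
  fixes C :: "perm set" and \<M> :: "bmat set"
  assumes "perm_class C"
    and "finite \<M>"
    and "\<forall>M\<in>\<M>. quasi_perm_mat M"
    and "is_m_basis C \<M>"
  shows "finite (p_basis C)"
proof -
  define K where "K = Max ((\<lambda>(p, q, A). p + q) ` \<M>)"
  have C: "C = Av_mat \<M>" using assms(4) by (simp add: is_m_basis_def)
  have "p_basis C \<subseteq> {\<pi>. is_perm \<pi> \<and> fst \<pi> \<le> K}"
  proof
    fix \<pi> assume \<pi>: "\<pi> \<in> p_basis C"
    then obtain p q A where "(p, q, A) \<in> \<M>" "fst \<pi> \<le> p + q"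
      using p_basis_Av_mat_size_le[of \<pi> \<M>] C by auto
    moreover from this(1) have "p + q \<le> K"
      unfolding K_def using assms(2) by (force intro: Max_ge)
    ultimately show "\<pi> \<in> {\<pi>. is_perm \<pi> \<and> fst \<pi> \<le> K}"
      using \<pi> by (auto simp: p_basis_def)
  qed
  then show ?thesis using finite_perms_size_le by (rule finite_subset)
qed

end
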